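(* Let $q$ be a prime power, $t\ge 1$, $B=\mathbb{F}_q$ and $F=\mathbb{F}_{q^t}$. Let $A\subseteq F$ with $|A|=n\le |F|$, let $1\le k<n$, and set $r=n-k$. Any linear repair scheme over $B$ for a single erased symbol of the Reed-Solomon code $\mathrm{RS}(A,k)$ has bandwidth at least \[ \ell \lfloor b_{\mathrm{AVE}} \rfloor + (n-1-\ell)\lceil b_{\mathrm{AVE}} \rceil \] sub-symbols over $B$, where \[ L = \frac{(r-1)(|F|-1)+(n-1)}{|F|},\qquad b_{\mathrm{AVE}} = \log_q\Big(\frac{(n-1)|F|}{(r-1)(|F|-1)+(n-1)}\Big)=\log_q\big((n-1)/L\big), \] and $\ell = n-1$ if $b_{\mathrm{AVE}}\in\mathbb{Z}$, while otherwise \[ \ell = \left\lfloor \frac{L - (n-1)q^{-\lceil b_{\mathrm{AVE}} \rceil}}{q^{-\lfloor b_{\mathrm{AVE}} \rfloor} - q^{-\lceil b_{\mathrm{AVE}} \rceil}}\right\rfloor . \]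
   Context: The Reed-Solomon code with evaluation set $A=\{\alpha_1,\dots,\alpha_n\}\subseteq F$ and dimension $k$ is $\mathrm{RS}(A,k)=\{(f(\alpha_1),\dots,f(\alpha_n)) : f\in F[x],\ \deg f<k\}$; the symbol $f(\alpha)$ is stored at a node indexed by $\alpha$. Elements of $F$ are symbols, elements of $B$ sub-symbols. Its dual code is a generalized Reed-Solomon code $\{(\lambda_1 g(\alpha_1),\dots,\lambda_n g(\alpha_n)): \deg g\le r-1\}$ for some nonzero multipliers $\lambda_i$. A linear repair scheme over $B$ for the erased symbol $f(\alpha^* )$, $\alpha^*\in A$, is one in which each remaining node $\alpha\ne\alpha^*$ sends $b_\alpha$ $B$-linear functions (sub-symbols) of its symbol, from which $f(\alpha^* )$ is recovered $B$-linearly for every codeword; its bandwidth is $\sum_{\alpha\in A\setminus\{\alpha^*\}} b_\alpha$ sub-symbols. Equivalently (Guruswami–Wootters), such a scheme corresponds to $t$ polynomials $g_1,\dots,g_t\in F[x]$ of degree at most $r-1$ with $\mathrm{rank}_B\{g_1(\alpha^* ),\dots,g_t(\alpha^* )\}=t$, its bandwidth being $\sum_{\alpha\ne\alpha^*}\mathrm{rank}_B\{g_1(\alpha),\dots,g_t(\alpha)\}$. *)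

theory Defs
  imports "HOL-Computational_Algebra.Polynomial" "HOL-Computational_Algebra.Primes" Complex_Main
begin

definition is_subfield :: "'f::field set \<Rightarrow> bool" where
  "is_subfield B \<longleftrightarrow> 0 \<in> B \<and> 1 \<in> B \<and>
     (\<forall>x\<in>B. \<forall>y\<in>B. x + y \<in> B \<and> x * y \<in> B) \<and>
     (\<forall>x\<in>B. - x \<in> B) \<and> (\<forall>x\<in>B. x \<noteq> 0 \<longrightarrow> inverse x \<in> B)"

definition B_linear_functional :: "'f::field set \<Rightarrow> ('f \<Rightarrow> 'f) \<Rightarrow> bool" where
  "B_linear_functional B phi \<longleftrightarrow> (\<forall>x. phi x \<in> B) \<and>
     (\<forall>x y. phi (x + y) = phi x + phi y) \<and>
     (\<forall>c\<in>B. \<forall>x. phi (c * x) = c * phi x)"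

text \<open>Index set of the downloaded sub-symbols: node alpha \<noteq> astar sends b alpha sub-symbols.\<close>
definition repair_index :: "'f set \<Rightarrow> 'f \<Rightarrow> ('f \<Rightarrow> nat) \<Rightarrow> ('f \<times> nat) set" where
  "repair_index A astar b = {(a, j). a \<in> A - {astar} \<and> j < b a}"

definition data_space :: "'f::field set \<Rightarrow> 'f set \<Rightarrow> 'f \<Rightarrow> ('f \<Rightarrow> nat) \<Rightarrow> ('f \<Rightarrow> nat \<Rightarrow> 'f) set" where
  "data_space B A astar b = {D. \<forall>a j. ((a, j) \<in> repair_index A astar b \<longrightarrow> D a j \<in> B) \<and>
                                    ((a, j) \<notin> repair_index A astar b \<longrightarrow> D a j = 0)}"

text \<open>Data downloaded when the stored codeword is given by polynomial f.\<close>
definition downloaded :: "'f set \<Rightarrow> 'f \<Rightarrow> ('f \<Rightarrow> nat) \<Rightarrow> ('f \<Rightarrow> nat \<Rightarrow> 'f \<Rightarrow> 'f) \<Rightarrow> 'f::field poly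
     \<Rightarrow> ('f \<Rightarrow> nat \<Rightarrow> 'f)" where
  "downloaded A astar b phi f = (\<lambda>a j. if (a, j) \<in> repair_index A astar b then phi a j (poly f a) else 0)"

definition linear_repair_scheme ::
  "'f::field set \<Rightarrow> 'f set \<Rightarrow> nat \<Rightarrow> 'f \<Rightarrow> ('f \<Rightarrow> nat) \<Rightarrow> ('f \<Rightarrow> nat \<Rightarrow> 'f \<Rightarrow> 'f)
     \<Rightarrow> (('f \<Rightarrow> nat \<Rightarrow> 'f) \<Rightarrow> 'f) \<Rightarrow> bool" where
  "linear_repair_scheme B A k astar b phi R \<longleftrightarrow>
     (\<forall>a\<in>A - {astar}. \<forall>j < b a. B_linear_functional B (phi a j)) \<and>
     (\<forall>D1\<in>data_space B A astar b. \<forall>D2\<in>data_space B A astar b.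
         R (\<lambda>a j. D1 a j + D2 a j) = R D1 + R D2) \<and>
     (\<forall>c\<in>B. \<forall>D\<in>data_space B A astar b. R (\<lambda>a j. c * D a j) = c * R D) \<and>
     (\<forall>f. degree f < k \<longrightarrow> R (downloaded A astar b phi f) = poly f astar)"

definition bandwidth :: "'f set \<Rightarrow> 'f \<Rightarrow> ('f \<Rightarrow> nat) \<Rightarrow> nat" where
  "bandwidth A astar b = (\<Sum>a\<in>A - {astar}. b a)"

end

theory Submission
  imports Defs
begin

text \<open>Let \<open>\<theta>\<close> be one of the (nonzero) queries. For \<open>\<beta> \<noteq> 0\<close>, the functional \<open>x \<mapsto> \<theta> (\<beta> x)\<close>
  composed with the recovery map yields a dual codeword of \<open>RS(A,k)\<close> that is nonzero at \<open>\<alpha>*\<close>,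
  hence vanishes at no more than \<open>r - 1\<close> nodes. Double counting over all \<open>\<beta> \<noteq> 0\<close> bounds the
  total size of the kernels \<open>N\<^sub>\<alpha>\<close> of \<open>\<beta> \<mapsto> (\<theta> (\<beta> R e\<^sub>\<alpha>\<^sub>,\<^sub>j))\<^sub>j\<close>, while \<open>|F| \<le> q\<^bsup>b\<^sub>\<alpha>\<^esup> |N\<^sub>\<alpha>|\<close>.
  Together, \<open>\<Sum>\<^sub>\<alpha> q\<^bsup>-b\<^sub>\<alpha>\<^esup> \<le> L\<close>. Minimising \<open>\<Sum>\<^sub>\<alpha> b\<^sub>\<alpha>\<close> over integers under this constraint is done by
  bounding the convex function \<open>q\<^sup>-\<^sup>x\<close> at integers from below by its secant between
  \<open>\<lfloor>b\<^sub>A\<^sub>V\<^sub>E\<rfloor>\<close> and \<open>\<lfloor>b\<^sub>A\<^sub>V\<^sub>E\<rfloor> + 1\<close>.\<close>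

lemma is_subfieldD:
  assumes "is_subfield B"
  shows "0 \<in> B" "1 \<in> B" "x \<in> B \<Longrightarrow> y \<in> B \<Longrightarrow> x * y \<in> B"
  using assms unfolding is_subfield_def by auto

lemma B_linear_functional_zero: "B_linear_functional B th \<Longrightarrow> th 0 = 0"
  unfolding B_linear_functional_def by (metis add_cancel_right_right)

lemma B_linear_functional_diff: "B_linear_functional B th \<Longrightarrow> th (x - y) = th x - th y"
  unfolding B_linear_functional_def by (metis eq_diff_eq)

lemma B_linear_functional_sum:
  "B_linear_functional B th \<Longrightarrow> th (\<Sum>x\<in>S. g x) = (\<Sum>x\<in>S. th (g x))"
proof (induction S rule: infinite_finite_induct)
  case (insert x S)
  then show ?case unfolding B_linear_functional_def by simp
qed (simp_all add: B_linear_functional_zero)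

lemma B_linear_functional_mult_left:
  "B_linear_functional B th \<Longrightarrow> B_linear_functional B (\<lambda>x. th (c * x))"
  unfolding B_linear_functional_def by (simp add: distrib_left mult.left_commute)

lemma repair_index_eq_Sigma: "repair_index A astar b = Sigma (A - {astar}) (\<lambda>a. {..<b a})"
  unfolding repair_index_def by auto

lemma finite_repair_index: "finite A \<Longrightarrow> finite (repair_index A astar b)"
  unfolding repair_index_eq_Sigma by auto

definition data_unit :: "'f \<times> nat \<Rightarrow> 'f \<Rightarrow> nat \<Rightarrow> 'f::field" where
  "data_unit x = (\<lambda>a j. if (a, j) = x then 1 else 0)"

lemma downloaded_in_data_space:
  "linear_repair_scheme B A k astar b phi R \<Longrightarrow> downloaded A astar b phi f \<in> data_space B A astar b"
  unfolding linear_repair_scheme_def data_space_def downloaded_def repair_index_def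
    B_linear_functional_def by auto

lemma repair_scheme_recovery_zero:
  assumes sch: "linear_repair_scheme B A k astar b phi R" and sf: "is_subfield B"
  shows "R (\<lambda>a j. 0) = 0"
proof -
  have "(\<lambda>a j. 0) \<in> data_space B A astar b"
    using is_subfieldD[OF sf] unfolding data_space_def by auto
  then have "R (\<lambda>a j. 0) = R (\<lambda>a j. 0) + R (\<lambda>a j. 0)"
    using sch unfolding linear_repair_scheme_def by fastforce
  then show ?thesis by (metis add_cancel_right_right)
qed

lemma repair_scheme_recovery_expansion:
  assumes sch: "linear_repair_scheme B A k astar b phi R" and sf: "is_subfield B"
    and fin: "finite A" and D: "D \<in> data_space B A astar b"
  shows "R D = (\<Sum>x\<in>repair_index A astar b. D (fst x) (snd x) * R (data_unit x))"
proof -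
  let ?I = "repair_index A astar b" and ?V = "data_space B A astar b"
  have add: "\<And>D1 D2. D1 \<in> ?V \<Longrightarrow> D2 \<in> ?V \<Longrightarrow> R (\<lambda>a j. D1 a j + D2 a j) = R D1 + R D2"
    and hom: "\<And>c D. c \<in> B \<Longrightarrow> D \<in> ?V \<Longrightarrow> R (\<lambda>a j. c * D a j) = c * R D"
    using sch unfolding linear_repair_scheme_def by blast+
  note B = is_subfieldD[OF sf]
  have DB: "\<And>a j. (a, j) \<in> ?I \<Longrightarrow> D a j \<in> B" and D0: "\<And>a j. (a, j) \<notin> ?I \<Longrightarrow> D a j = 0"
    using D unfolding data_space_def by auto
  have restrict: "R (\<lambda>a j. if (a, j) \<in> J then D a j else 0)
      = (\<Sum>x\<in>J. D (fst x) (snd x) * R (data_unit x))" if "J \<subseteq> ?I" for J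
  proof -
    have "finite J" using that finite_repair_index[OF fin] finite_subset by blast
    then show ?thesis using that
    proof (induction J rule: finite_induct)
      case empty
      then show ?case using repair_scheme_recovery_zero[OF sch sf] by simp
    next
      case (insert x J)
      let ?c = "D (fst x) (snd x)"
      have c: "?c \<in> B" using insert.prems DB by (cases x) auto
      have J: "(\<lambda>a j. if (a, j) \<in> J then D a j else 0) \<in> ?V"
        using insert.prems DB B unfolding data_space_def by auto
      have e: "data_unit x \<in> ?V"
        using insert.prems B unfolding data_space_def data_unit_def by auto
      then have ce: "(\<lambda>a j. ?c * data_unit x a j) \<in> ?V"
        using c B unfolding data_space_def by auto
      have "(\<lambda>a j. if (a, j) \<in> insert x J then D a j else 0)
          = (\<lambda>a j. (if (a, j) \<in> J then D a j else 0) + ?c * data_unit x a j)"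
        using insert.hyps by (auto simp: data_unit_def fun_eq_iff)
      then show ?case
        using insert add[OF J ce] hom[OF c e] by simp
    qed
  qed
  have "(\<lambda>a j. if (a, j) \<in> ?I then D a j else 0) = D" using D0 by (auto simp: fun_eq_iff)
  then show ?thesis using restrict[of ?I] by simp
qed

lemma repair_scheme_recovery_formula:
  assumes sch: "linear_repair_scheme B A k astar b phi R" and sf: "is_subfield B"
    and fin: "finite A" and f: "degree f < k"
  shows "poly f astar = (\<Sum>x\<in>repair_index A astar b.
            phi (fst x) (snd x) (poly f (fst x)) * R (data_unit x))"
proof -
  have "poly f astar = R (downloaded A astar b phi f)"
    using sch f unfolding linear_repair_scheme_def by auto
  also have "\<dots> = (\<Sum>x\<in>repair_index A astar b.
            downloaded A astar b phi f (fst x) (snd x) * R (data_unit x))"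
    by (rule repair_scheme_recovery_expansion[OF sch sf fin downloaded_in_data_space[OF sch]])
  also have "\<dots> = (\<Sum>x\<in>repair_index A astar b.
            phi (fst x) (snd x) (poly f (fst x)) * R (data_unit x))"
    by (rule sum.cong) (auto simp: downloaded_def)
  finally show ?thesis .
qed

lemma repair_scheme_nonzero_query:
  assumes sch: "linear_repair_scheme B A k astar b phi R" and sf: "is_subfield B" and k: "1 \<le> k"
  obtains a j z where "a \<in> A - {astar}" "j < b a" "phi a j z \<noteq> 0"
proof (rule ccontr)
  assume "\<not> thesis"
  with that have "downloaded A astar b phi 1 = (\<lambda>a j. 0)"
    unfolding downloaded_def repair_index_def by (auto simp: fun_eq_iff)
  moreover have "R (downloaded A astar b phi 1) = 1"
    using sch k unfolding linear_repair_scheme_def by auto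
  ultimately show False using repair_scheme_recovery_zero[OF sch sf] by simp
qed

lemma repair_scheme_functional_identity:
  assumes sch: "linear_repair_scheme B A k astar b phi R" and sf: "is_subfield B"
    and fin: "finite A" and f: "degree f < k" and psi: "B_linear_functional B psi"
  shows "psi (poly f astar) = (\<Sum>a\<in>A - {astar}. \<Sum>j<b a.
            phi a j (poly f a) * psi (R (data_unit (a, j))))"
proof -
  have phiB: "\<And>a j x. a \<in> A - {astar} \<Longrightarrow> j < b a \<Longrightarrow> phi a j x \<in> B"
    using sch unfolding linear_repair_scheme_def B_linear_functional_def by blast
  have "psi (poly f astar) = (\<Sum>x\<in>repair_index A astar b.
            phi (fst x) (snd x) (poly f (fst x)) * psi (R (data_unit x)))"
    unfolding repair_scheme_recovery_formula[OF sch sf fin f] B_linear_functional_sum[OF psi]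
    by (rule sum.cong) (use psi phiB in \<open>auto simp: repair_index_def B_linear_functional_def\<close>)
  also have "\<dots> = (\<Sum>a\<in>A - {astar}. \<Sum>j<b a.
            phi a j (poly f a) * psi (R (data_unit (a, j))))"
    unfolding repair_index_eq_Sigma using fin by (subst sum.Sigma) (auto simp: case_prod_beta)
  finally show ?thesis .
qed

text \<open>The nodes outside the set in question number fewer than \<open>k\<close>, so a polynomial of degree
  \<open>< k\<close> vanishes on all of them and takes the value \<open>z\<close> at \<open>\<alpha>*\<close>; the identity above then
  forces \<open>\<psi> z = 0\<close>.\<close>

lemma card_vanishing_nodes_le:
  assumes sch: "linear_repair_scheme B A k astar b phi R" and sf: "is_subfield B"
    and fin: "finite A" and psi: "B_linear_functional B psi" and z: "psi z \<noteq> 0"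
    and astar: "astar \<in> A" and k: "k < card A"
  shows "card {a \<in> A - {astar}. \<forall>j<b a. psi (R (data_unit (a, j))) = 0} \<le> card A - k - 1"
proof (rule ccontr)
  define Z where "Z = {a \<in> A - {astar}. \<forall>j<b a. psi (R (data_unit (a, j))) = 0}"
  define S where "S = A - {astar} - Z"
  assume "\<not> ?thesis"
  then have "card Z \<ge> card A - k" unfolding Z_def by simp
  moreover have "card S = card (A - {astar}) - card Z"
    unfolding S_def using fin by (intro card_Diff_subset) (auto simp: Z_def)
  moreover have "card Z \<le> card A - 1"
    using card_mono[of "A - {astar}" Z] fin astar by (auto simp: Z_def)
  ultimately have cS: "card S < k" using astar fin k by simp
  define P where "P = (\<Prod>s\<in>S. [:- s, 1:])"
  have degP: "degree P = card S" unfolding P_def by (subst degree_prod_sum_eq) auto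
  have PA: "poly P astar \<noteq> 0" and PS: "\<And>s. s \<in> S \<Longrightarrow> poly P s = 0"
    unfolding P_def poly_prod using fin by (auto simp: S_def)
  define f where "f = smult (z / poly P astar) P"
  have degf: "degree f < k" unfolding f_def using degP cS
    by (metis degree_smult_le le_less_trans)
  have "psi z = psi (poly f astar)" unfolding f_def using PA by simp
  also have "\<dots> = (\<Sum>a\<in>A - {astar}. \<Sum>j<b a. phi a j (poly f a) * psi (R (data_unit (a, j))))"
    by (rule repair_scheme_functional_identity[OF sch sf fin degf psi])
  also have "\<dots> = 0"
  proof (intro sum.neutral ballI)
    fix a j assume a: "a \<in> A - {astar}" and j: "j \<in> {..<b a}"
    show "phi a j (poly f a) * psi (R (data_unit (a, j))) = 0"
    proof (cases "a \<in> Z")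
      case False
      then have "poly f a = 0" using a PS unfolding S_def f_def by simp
      moreover have "B_linear_functional B (phi a j)"
        using sch a j unfolding linear_repair_scheme_def by auto
      ultimately show ?thesis using B_linear_functional_zero[of B "phi a j"] by simp
    qed (use j in \<open>simp add: Z_def\<close>)
  qed
  finally show False using z by simp
qed

lemma sum_card_kernels_le:
  fixes A :: "'f::{field,finite} set"
  assumes sch: "linear_repair_scheme B A k astar b phi R" and sf: "is_subfield B"
    and th: "B_linear_functional B th" and z: "th z \<noteq> 0"
    and astar: "astar \<in> A" and k: "k < card A"
  shows "(\<Sum>a\<in>A - {astar}. card {\<beta>. \<forall>j<b a. th (\<beta> * R (data_unit (a, j))) = 0} - 1)
          \<le> (card (UNIV :: 'f set) - 1) * (card A - k - 1)"
proof -
  define P where "P = (\<lambda>a \<beta>. \<forall>j<b a. th (\<beta> * R (data_unit (a, j))) = 0)"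
  define U where "U = (UNIV :: 'f set) - {0}"
  have "(\<Sum>a\<in>A - {astar}. card {\<beta>. P a \<beta>} - 1) = (\<Sum>a\<in>A - {astar}. card {\<beta>\<in>U. P a \<beta>})"
  proof (rule sum.cong)
    fix a
    have "P a 0" unfolding P_def using B_linear_functional_zero[OF th] by simp
    moreover have "{\<beta>\<in>U. P a \<beta>} = {\<beta>. P a \<beta>} - {0}" unfolding U_def by auto
    ultimately show "card {\<beta>. P a \<beta>} - 1 = card {\<beta>\<in>U. P a \<beta>}" by simp
  qed simp
  also have "\<dots> = (\<Sum>\<beta>\<in>U. card {a\<in>A - {astar}. P a \<beta>})"
    using sum.swap_restrict[of "A - {astar}" U "\<lambda>_ _. 1::nat" "\<lambda>a \<beta>. P a \<beta>"] by simp
  also have "\<dots> \<le> (\<Sum>\<beta>\<in>U. card A - k - 1)"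
  proof (rule sum_mono)
    fix \<beta> assume "\<beta> \<in> U"
    then have "th (\<beta> * (z / \<beta>)) \<noteq> 0" using z unfolding U_def by simp
    then show "card {a\<in>A - {astar}. P a \<beta>} \<le> card A - k - 1"
      using card_vanishing_nodes_le[OF sch sf finite B_linear_functional_mult_left[OF th, of \<beta>] _ astar k]
      unfolding P_def by blast
  qed
  also have "\<dots> = (card (UNIV :: 'f set) - 1) * (card A - k - 1)" unfolding U_def by simp
  finally show ?thesis unfolding P_def .
qed

lemma card_UNIV_le_card_range_mult_card:
  fixes h :: "'a::{group_add,finite} \<Rightarrow> 'b"
  assumes "\<And>x y. h x = h y \<Longrightarrow> x - y \<in> K"
  shows "card (UNIV :: 'a set) \<le> card (range h) * card K"
proof -
  define rep where "rep = (\<lambda>v. SOME x. h x = v)"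
  define g where "g = (\<lambda>x. (h x, x - rep (h x)))"
  have rep: "h (rep (h x)) = h x" for x unfolding rep_def by (rule someI) auto
  have "inj g" unfolding g_def by (rule injI) (auto simp: diff_eq_eq)
  then have "card (UNIV :: 'a set) = card (range g)" by (simp add: card_image)
  also have "\<dots> \<le> card (range h \<times> K)"
    using assms rep by (intro card_mono) (auto simp: g_def)
  finally show ?thesis by (simp add: card_cartesian_product)
qed

lemma card_UNIV_le_power_mult_card_kernel:
  fixes th :: "'f::{field,finite} \<Rightarrow> 'f" and c :: "nat \<Rightarrow> 'f"
  assumes th: "B_linear_functional B th"
  shows "card (UNIV :: 'f set) \<le> card B ^ m * card {\<beta>. \<forall>j<m. th (\<beta> * c j) = 0}"
proof -
  define h where "h = (\<lambda>\<beta>. map (\<lambda>j. th (\<beta> * c j)) [0..<m])"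
  have "card (UNIV :: 'f set) \<le> card (range h) * card {\<beta>. \<forall>j<m. th (\<beta> * c j) = 0}"
  proof (rule card_UNIV_le_card_range_mult_card)
    fix x y assume "h x = h y"
    then have "\<forall>j<m. th (x * c j) = th (y * c j)" unfolding h_def map_eq_conv by simp
    then show "x - y \<in> {\<beta>. \<forall>j<m. th (\<beta> * c j) = 0}"
      by (simp add: left_diff_distrib B_linear_functional_diff[OF th])
  qed
  moreover have "card (range h) \<le> card {xs. set xs \<subseteq> B \<and> length xs = m}"
    using th unfolding h_def B_linear_functional_def
    by (intro card_mono) (auto intro!: finite_lists_length_eq)
  then have "card (range h) \<le> card B ^ m" by (simp add: card_lists_length_eq)
  ultimately show ?thesis using mult_le_mono1 order_trans by blast
qed

lemma repair_scheme_sum_powr_le: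
  fixes A :: "'f::{field,finite} set"
  assumes sch: "linear_repair_scheme B A k astar b phi R" and sf: "is_subfield B"
    and astar: "astar \<in> A" and k: "1 \<le> k" "k < card A"
  shows "(\<Sum>a\<in>A - {astar}. real (card B) powr (- real (b a)))
           \<le> (real (card A - k - 1) * (real (card (UNIV :: 'f set)) - 1) + real (card A - 1))
               / real (card (UNIV :: 'f set))"
proof -
  define Fc where "Fc = real (card (UNIV :: 'f set))"
  define q where "q = real (card B)"
  obtain a0 j0 z where "a0 \<in> A - {astar}" "j0 < b a0" and z: "phi a0 j0 z \<noteq> 0"
    using repair_scheme_nonzero_query[OF sch sf k(1)] .
  then have th: "B_linear_functional B (phi a0 j0)"
    using sch unfolding linear_repair_scheme_def by auto
  define N where "N = (\<lambda>a. card {\<beta>. \<forall>j<b a. phi a0 j0 (\<beta> * R (data_unit (a, j))) = 0})"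
  have N1: "N a \<ge> 1" for a
  proof -
    have "0 \<in> {\<beta>. \<forall>j<b a. phi a0 j0 (\<beta> * R (data_unit (a, j))) = 0}"
      using B_linear_functional_zero[OF th] by simp
    then have "{\<beta>. \<forall>j<b a. phi a0 j0 (\<beta> * R (data_unit (a, j))) = 0} \<noteq> {}" by blast
    then show ?thesis unfolding N_def by (simp add: Suc_le_eq card_gt_0_iff)
  qed
  have q: "q > 0" using is_subfieldD(1)[OF sf] unfolding q_def by (auto simp: card_gt_0_iff)
  have Fc: "Fc \<ge> 1" unfolding Fc_def by (simp add: Suc_leI card_gt_0_iff)
  have "(\<Sum>a\<in>A - {astar}. Fc * q powr (- real (b a)) - 1) \<le> (\<Sum>a\<in>A - {astar}. real (N a - 1))"
  proof (rule sum_mono)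
    fix a
    have "card (UNIV :: 'f set) \<le> card B ^ b a * N a"
      unfolding N_def by (rule card_UNIV_le_power_mult_card_kernel[OF th])
    then have "Fc \<le> q ^ b a * real (N a)"
      unfolding Fc_def q_def of_nat_power[symmetric] of_nat_mult[symmetric] of_nat_le_iff .
    then have "Fc * q powr (- real (b a)) \<le> real (N a)"
      using q by (simp add: powr_minus powr_realpow field_simps)
    then show "Fc * q powr (- real (b a)) - 1 \<le> real (N a - 1)" using N1[of a] by simp
  qed
  also have "\<dots> = real (\<Sum>a\<in>A - {astar}. N a - 1)" by (rule of_nat_sum[symmetric])
  also have "\<dots> \<le> real ((card (UNIV :: 'f set) - 1) * (card A - k - 1))"
    using sum_card_kernels_le[OF sch sf th z astar k(2)] unfolding N_def of_nat_le_iff .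
  also have "\<dots> = (Fc - 1) * real (card A - k - 1)" using Fc by (simp add: Fc_def of_nat_diff)
  finally have "Fc * (\<Sum>a\<in>A - {astar}. q powr (- real (b a))) - real (card A - 1)
      \<le> (Fc - 1) * real (card A - k - 1)"
    using astar by (simp add: sum_subtractf sum_distrib_left)
  then show ?thesis using Fc unfolding Fc_def[symmetric] q_def[symmetric] by (simp add: field_simps)
qed

lemma powr_neg_int_ge_secant:
  fixes q :: real and u :: int
  assumes q: "q > 1"
  shows "1 - of_int u * (1 - 1 / q) \<le> q powr (- of_int u)"
proof (cases "u \<ge> 0")
  case True
  then obtain v :: nat where u: "u = int v" by (metis nonneg_eq_int)
  have "1 + real v * (1 / q - 1) \<le> (1 + (1 / q - 1)) ^ v"
    by (rule Bernoulli_inequality) (use q in simp)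
  also have "\<dots> = q powr (- real v)"
    using q by (simp add: powr_minus powr_realpow power_divide divide_inverse power_inverse)
  finally show ?thesis unfolding u by (simp add: algebra_simps)
next
  case False
  define v where "v = nat (- u)"
  have u: "u = - int v" using False by (simp add: v_def)
  have "1 - 1 / q \<le> q - 1"
  proof -
    have "(q - 1) - (1 - 1 / q) = (q - 1)\<^sup>2 / q" using q by (simp add: field_simps power2_eq_square)
    then show ?thesis using q by (smt (verit) divide_nonneg_pos zero_le_power2)
  qed
  then have "1 + real v * (1 - 1 / q) \<le> 1 + real v * (q - 1)" by (simp add: mult_left_mono)
  also have "\<dots> \<le> (1 + (q - 1)) ^ v" by (rule Bernoulli_inequality) (use q in simp)
  also have "\<dots> = q powr real v" using q by (simp add: powr_realpow)
  finally show ?thesis unfolding u by simp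
qed

lemma powr_neg_ge_secant:
  fixes q :: real and m c :: int
  assumes q: "q > 1"
  shows "q powr (- of_int m) - (of_int c - of_int m) * (q powr (- of_int m) - q powr (- of_int m - 1))
           \<le> q powr (- of_int c)"
proof -
  have e: "q powr (- of_int m - 1) = q powr (- of_int m) / q" using q by (simp add: powr_diff)
  have "q powr (- of_int m) - (of_int c - of_int m) * (q powr (- of_int m) - q powr (- of_int m - 1))
      = q powr (- of_int m) * (1 - of_int (c - m) * (1 - 1 / q))"
    unfolding e using q by (simp add: field_simps)
  also have "\<dots> \<le> q powr (- of_int m) * q powr (- of_int (c - m))"
    using q by (intro mult_left_mono powr_neg_int_ge_secant) auto
  also have "\<dots> = q powr (- of_int c)" by (simp flip: powr_add)
  finally show ?thesis .
qed

lemma sum_powr_le_imp_secant_bound: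
  fixes q L :: real and b :: "'a \<Rightarrow> nat" and m :: int
  assumes q: "q > 1" and sum: "(\<Sum>a\<in>S. q powr (- real (b a))) \<le> L"
  shows "real (card S) * q powr (- of_int m) - L
           \<le> (real (\<Sum>a\<in>S. b a) - real (card S) * of_int m) * (q powr (- of_int m) - q powr (- of_int m - 1))"
proof -
  let ?d = "q powr (- of_int m) - q powr (- of_int m - 1)"
  have "(\<Sum>a\<in>S. q powr (- of_int m) - (real (b a) - of_int m) * ?d) \<le> L"
    using powr_neg_ge_secant[OF q, of m] by (intro order_trans[OF sum_mono sum]) (metis of_int_of_nat_eq)
  moreover have "(\<Sum>a\<in>S. q powr (- of_int m) - (real (b a) - of_int m) * ?d)
      = real (card S) * q powr (- of_int m) - (real (\<Sum>a\<in>S. b a) - real (card S) * of_int m) * ?d"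
    by (simp add: sum_subtractf sum_distrib_right[symmetric] left_diff_distrib)
  ultimately show ?thesis by linarith
qed

lemma sum_nat_ge_floor_ceiling_bound:
  fixes q L N bave :: real and b :: "'a \<Rightarrow> nat" and l :: int
  assumes q: "q > 1" and L: "L > 0" and N: "real (card S) = N" "N > 0"
    and sum: "(\<Sum>a\<in>S. q powr (- real (b a))) \<le> L"
    and bave: "bave = log q (N / L)"
    and l: "l = (if bave \<in> \<int> then int (card S)
                 else \<lfloor>(L - N * q powr (- of_int \<lceil>bave\<rceil>)) /
                       (q powr (- of_int \<lfloor>bave\<rfloor>) - q powr (- of_int \<lceil>bave\<rceil>))\<rfloor>)"
  shows "of_int l * of_int \<lfloor>bave\<rfloor> + (N - of_int l) * of_int \<lceil>bave\<rceil> \<le> real (\<Sum>a\<in>S. b a)"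
proof -
  define m where "m = \<lfloor>bave\<rfloor>"
  define pm where "pm = q powr (- of_int m)"
  define pM where "pM = q powr (- of_int m - 1)"
  define Sb where "Sb = real (\<Sum>a\<in>S. b a)"
  have "pM = pm / q" using q by (simp add: pm_def pM_def powr_diff)
  moreover have "pm / q < pm" using q by (simp add: pm_def divide_less_eq)
  ultimately have d: "pm - pM > 0" by simp
  have key: "N * pm - L \<le> (Sb - N * of_int m) * (pm - pM)"
    using sum_powr_le_imp_secant_bound[OF q sum, of m] unfolding pm_def pM_def Sb_def N(1) .
  show ?thesis
  proof (cases "bave \<in> \<int>")
    case True
    then have fc: "of_int m = bave" "\<lceil>bave\<rceil> = m" by (auto simp: m_def elim: Ints_cases)
    then have "pm = L / N" using q N L by (simp add: pm_def bave powr_minus)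
    then have "N * of_int m \<le> Sb" using key d N by (simp add: zero_le_mult_iff)
    then show ?thesis using True N unfolding l Sb_def m_def[symmetric] fc by (simp add: algebra_simps)
  next
    case False
    then have ce: "\<lceil>bave\<rceil> = m + 1" unfolding m_def
      by (metis Ints_of_int ceiling_altdef)
    define x where "x = (L - N * pM) / (pm - pM)"
    have lx: "l = \<lfloor>x\<rfloor>" using False ce by (simp add: l x_def pm_def pM_def m_def)
    have "N * pm - L = (N - x) * (pm - pM)" using d by (simp add: x_def field_simps)
    then have "N - x \<le> Sb - N * of_int m" using key d by (simp add: mult_le_cancel_right)
    then have "of_int (int (card S) * m + int (card S) - int (\<Sum>a\<in>S. b a)) \<le> x"
      using N(1) unfolding Sb_def by simp
    then have "int (card S) * m + int (card S) - int (\<Sum>a\<in>S. b a) \<le> \<lfloor>x\<rfloor>"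
      by (rule le_floor_iff[THEN iffD2])
    then have "of_int (int (card S) * m + int (card S) - int (\<Sum>a\<in>S. b a)) \<le> real_of_int \<lfloor>x\<rfloor>"
      by (simp only: of_int_le_iff)
    then show ?thesis using N(1) unfolding lx ce m_def[symmetric] by (simp add: algebra_simps)
  qed
qed

theorem proposition1:
  fixes B :: "'f::{field,finite} set" and A :: "'f set" and q t n k :: nat and astar :: 'f
    and b :: "'f \<Rightarrow> nat" and phi :: "'f \<Rightarrow> nat \<Rightarrow> 'f \<Rightarrow> 'f" and R :: "('f \<Rightarrow> nat \<Rightarrow> 'f) \<Rightarrow> 'f"
  assumes q_pp: "\<exists>p m. prime p \<and> m > 0 \<and> q = p ^ m"
    and t: "t \<ge> 1"
    and B_sub: "is_subfield B" and B_card: "card B = q"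
    and F_card: "card (UNIV :: 'f set) = q ^ t"
    and A_card: "card A = n" and n_le: "n \<le> card (UNIV :: 'f set)"
    and k: "1 \<le> k" "k < n"
    and astar: "astar \<in> A"
    and scheme: "linear_repair_scheme B A k astar b phi R"
  shows
    "let r = n - k; Fc = real (card (UNIV :: 'f set));
         L = (real (r - 1) * (Fc - 1) + real (n - 1)) / Fc;
         bave = log (real q) ((real n - 1) * Fc / (real (r - 1) * (Fc - 1) + real (n - 1)));
         l = (if bave \<in> \<int> then int (n - 1)
              else \<lfloor>(L - (real n - 1) * real q powr (- of_int \<lceil>bave\<rceil>)) /
                     (real q powr (- of_int \<lfloor>bave\<rfloor>) - real q powr (- of_int \<lceil>bave\<rceil>))\<rfloor>)
     in real (bandwidth A astar b) \<ge>
          of_int l * of_int \<lfloor>bave\<rfloor> + (real n - 1 - of_int l) * of_int \<lceil>bave\<rceil>"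
proof -
  define Fc where "Fc = real (card (UNIV :: 'f set))"
  define L where "L = (real (n - k - 1) * (Fc - 1) + real (n - 1)) / Fc"
  have "card {0, 1 :: 'f} \<le> q"
    unfolding B_card[symmetric] using is_subfieldD[OF B_sub] by (intro card_mono) auto
  then have q: "real q > 1" by simp
  have Fc: "Fc \<ge> 1" unfolding Fc_def by (simp add: Suc_le_eq card_gt_0_iff)
  then have L: "L > 0" unfolding L_def using k by (intro divide_pos_pos add_nonneg_pos) auto
  have cS: "card (A - {astar}) = n - 1" using astar A_card by simp
  have N: "real (card (A - {astar})) = real n - 1" "real n - 1 > 0"
    using cS k by (auto simp: of_nat_diff)
  have sum: "(\<Sum>a\<in>A - {astar}. real q powr (- real (b a))) \<le> L"
    using repair_scheme_sum_powr_le[OF scheme B_sub astar] k unfolding A_card B_card L_def Fc_def by simp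
  have bave: "log (real q) ((real n - 1) * Fc / (real (n - k - 1) * (Fc - 1) + real (n - 1)))
      = log (real q) ((real n - 1) / L)"
    unfolding L_def using Fc by simp
  show ?thesis
    using sum_nat_ge_floor_ceiling_bound[OF q L N sum bave refl]
    unfolding cS Let_def bandwidth_def L_def Fc_def .
qed

end
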